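(* Let $n\ge 3$ and let $\mathcal{P}_E^c(D_{2n})$ be the conjugacy super enhanced power graph of the dihedral group $D_{2n}$. (i) If $n$ is odd, the Sombor spectrum of $\mathcal{P}_E^c(D_{2n})$ consists of $-(n-1)\sqrt2$ with multiplicity $n-2$, $-n\sqrt2$ with multiplicity $n-1$, and the three roots (with multiplicity) of \[x\big(x-(n-1)(n-2)\sqrt2\big)\big(x-n(n-1)\sqrt2\big)-(n-1)(5n^2-6n+2)\big(x-n(n-1)\sqrt2\big)-n(5n^2-4n+1)\big(x-(n-1)(n-2)\sqrt2\big).\] (ii) If $n$ is even, the Sombor spectrum consists of $-\tfrac n2\sqrt2$ with multiplicity $n-2$, $-(n-1)\sqrt2$ with multiplicity $n-2$, $\tfrac{n(n-2)}{4}\sqrt2$ with multiplicity $1$, and the three roots (with multiplicity) of \[x\big(x-(n-1)(n-2)\sqrt2\big)\Big(x-\tfrac{n(n-2)}{4}\sqrt2\Big)-(n-1)(5n^2-6n+2)\Big(x-\tfrac{n(n-2)}{4}\sqrt2\Big)-\tfrac n4(17n^2-16n+4)\big(x-(n-2)(n-1)\sqrt2\big).\]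
   Context: For a finite simple graph $\Gamma$ with vertices $u_1,\dots,u_N$, the Sombor matrix $S(\Gamma)$ has $(i,j)$ entry $\sqrt{\deg(u_i)^2+\deg(u_j)^2}$ if $u_i,u_j$ are adjacent and $0$ otherwise; the Sombor spectrum is the multiset of its eigenvalues. $D_{2n}=\langle a,b: a^n=b^2=e,\ ba=a^{-1}b\rangle$. The enhanced power graph $\mathcal{P}_E(G)$ has vertex set $G$, distinct vertices adjacent iff they lie in a common cyclic subgroup. The conjugacy super enhanced power graph $\mathcal{P}_E^c(G)$ has vertex set $G$, and distinct $g,h$ are adjacent iff $g,h$ are conjugate or there exist $g'$ conjugate to $g$ and $h'$ conjugate to $h$ adjacent in $\mathcal{P}_E(G)$. *)

theory Defs
  imports "HOL-Algebra.Group" "Jordan_Normal_Form.Char_Poly"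
    "HOL-Computational_Algebra.Fundamental_Theorem_Algebra"
begin

text \<open>Element (k, s) represents a^k b^s (0 \<le> k < n); so a = (1,False), b = (0,True).
  Multiplication: a^i b^s a^j b^t = a^(i + (-1)^s j) b^(s+t).\<close>

definition dihedral :: "nat \<Rightarrow> (nat \<times> bool) monoid" where
  "dihedral n = \<lparr> carrier = {0..<n} \<times> UNIV,
     mult = (\<lambda>(i, s) (j, t). ((if s then i + n - j else i + j) mod n, s \<noteq> t)),
     one = (0, False) \<rparr>"

definition enh_power_adj where
  "enh_power_adj G g h \<longleftrightarrow> g \<in> carrier G \<and> h \<in> carrier G \<and> g \<noteq> h \<and>
     (\<exists>c \<in> carrier G. \<exists>(i::int) (j::int). g = c [^]\<^bsub>G\<^esub> i \<and> h = c [^]\<^bsub>G\<^esub> j)"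

definition conjugate where
  "conjugate G g h \<longleftrightarrow> g \<in> carrier G \<and> h \<in> carrier G \<and>
     (\<exists>x \<in> carrier G. h = x \<otimes>\<^bsub>G\<^esub> g \<otimes>\<^bsub>G\<^esub> inv\<^bsub>G\<^esub> x)"

definition conj_super_enh_power_adj where
  "conj_super_enh_power_adj G g h \<longleftrightarrow> g \<in> carrier G \<and> h \<in> carrier G \<and> g \<noteq> h \<and>
     (conjugate G g h \<or>
      (\<exists>g' h'. conjugate G g g' \<and> conjugate G h h' \<and> enh_power_adj G g' h'))"

definition graph_deg :: "'a set \<Rightarrow> ('a \<Rightarrow> 'a \<Rightarrow> bool) \<Rightarrow> 'a \<Rightarrow> nat" where
  "graph_deg V E v = card {w \<in> V. E v w}"

text \<open>Sombor matrix w.r.t. the vertex ordering given by the list vs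
  (the spectrum does not depend on the ordering).\<close>
definition sombor_matrix :: "'a list \<Rightarrow> ('a \<Rightarrow> 'a \<Rightarrow> bool) \<Rightarrow> real mat" where
  "sombor_matrix vs E = mat (length vs) (length vs) (\<lambda>(i, j).
     if E (vs ! i) (vs ! j)
     then sqrt (real (graph_deg (set vs) E (vs ! i))^2 + real (graph_deg (set vs) E (vs ! j))^2)
     else 0)"

definition sombor_spectrum :: "'a list \<Rightarrow> ('a \<Rightarrow> 'a \<Rightarrow> bool) \<Rightarrow> complex multiset" where
  "sombor_spectrum vs E = proots (char_poly (map_mat complex_of_real (sombor_matrix vs E)))"

text \<open>Sombor spectrum of the conjugacy super enhanced power graph of D_{2n},
  vertices listed as e, a, ..., a^(n-1), b, ab, ..., a^(n-1) b (this list enumerates carrier (dihedral n) without repetition).\<close>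
definition dihedral_cse_sombor_spectrum :: "nat \<Rightarrow> complex multiset" where
  "dihedral_cse_sombor_spectrum n =
     sombor_spectrum (map (\<lambda>k. (k, False)) [0..<n] @ map (\<lambda>k. (k, True)) [0..<n])
       (conj_super_enh_power_adj (dihedral n))"

end

(* The conjugacy super enhanced power graph of D_2n is the identity joined to disjoint cliques:
   the non-trivial rotations, and the reflections, which form one conjugacy class for odd n and
   two (a^k b with k even, resp. odd) for even n. Its Sombor matrix is therefore constant on the
   blocks of this partition except for the zero diagonal. Such a matrix acts on the class
   indicator vectors through a small quotient matrix, and multiplies each difference e_u - e_v of
   unit vectors of two vertices of a class c by -w(c,c). These vectors form a basis, so the
   spectrum consists of the eigenvalues of the 3x3 (odd n) resp. 4x4 (even n) quotient matrix
   together with -w(c,c) with multiplicity |c| - 1. The quotient matrices are arrowhead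
   matrices; for even n the two reflection classes split off the eigenvalue n(n-2)/4 sqrt 2. *)

theory Submission
  imports Defs "HOL-Algebra.Generated_Groups"
begin

section \<open>Conjugacy and enhanced power adjacency in groups\<close>

lemma (in group) conjugate_refl: "g \<in> carrier G \<Longrightarrow> conjugate G g g"
  unfolding conjugate_def by (metis l_one one_closed inv_one r_one)

lemma (in group) conjugate_one_iff:
  assumes "conjugate G g h"
  shows "g = \<one> \<longleftrightarrow> h = \<one>"
proof -
  from assms obtain x where x: "x \<in> carrier G" and g: "g \<in> carrier G" and h: "h = x \<otimes> g \<otimes> inv x"
    unfolding conjugate_def by auto
  have "g = inv x \<otimes> h \<otimes> x"
    using x g by (simp add: h m_assoc inv_solve_left)
  then show ?thesis
    using x h by auto
qed

lemma enh_power_adj_sym: "enh_power_adj G g h \<Longrightarrow> enh_power_adj G h g"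
  unfolding enh_power_adj_def by blast

lemma (in group) enh_power_adj_one:
  assumes "v \<in> carrier G" "v \<noteq> \<one>"
  shows "enh_power_adj G \<one> v"
proof -
  have "\<one> = v [^] (0::int)" "v = v [^] (1::int)"
    using assms(1) by simp_all
  then show ?thesis
    unfolding enh_power_adj_def using assms by (metis one_closed)
qed

lemma (in group) conj_super_enh_power_adj_if_enh_power_adj:
  "enh_power_adj G g h \<Longrightarrow> conj_super_enh_power_adj G g h"
  unfolding conj_super_enh_power_adj_def
  by (auto simp: enh_power_adj_def intro: conjugate_refl)

section \<open>The dihedral group\<close>

lemma dihedral_carrier [simp]: "carrier (dihedral n) = {0..<n} \<times> UNIV"
  by (simp add: dihedral_def)

lemma dihedral_one: "\<one>\<^bsub>dihedral n\<^esub> = (0, False)"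
  by (simp add: dihedral_def)

lemma dihedral_mult:
  "(i, s) \<otimes>\<^bsub>dihedral n\<^esub> (j, t) = ((if s then i + n - j else i + j) mod n, s \<noteq> t)"
  by (simp add: dihedral_def)

lemma int_dihedral_index:
  assumes "j \<le> n"
  shows "int ((if s then i + n - j else i + j) mod n) = (int i + (if s then - int j else int j)) mod int n"
proof (cases s)
  case True
  have "int ((i + n - j) mod n) = ((int i - int j) + int n) mod int n"
    using assms by (simp add: zmod_int of_nat_diff algebra_simps)
  also have "\<dots> = (int i - int j) mod int n"
    by (rule mod_add_self2)
  finally show ?thesis
    using True by simp
qed (simp add: zmod_int)

lemma dihedral_mult_assoc:
  assumes "n > 0"
    and "x \<in> carrier (dihedral n)" "y \<in> carrier (dihedral n)" "z \<in> carrier (dihedral n)"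
  shows "x \<otimes>\<^bsub>dihedral n\<^esub> y \<otimes>\<^bsub>dihedral n\<^esub> z = x \<otimes>\<^bsub>dihedral n\<^esub> (y \<otimes>\<^bsub>dihedral n\<^esub> z)"
proof -
  obtain i s j t k u where xyz: "x = (i, s)" "y = (j, t)" "z = (k, u)"
    by (cases x; cases y; cases z)
  then have jk: "j \<le> n" "k \<le> n"
    using assms by auto
  define a where "a = (if s then i + n - j else i + j) mod n"
  define b where "b = (if t then j + n - k else j + k) mod n"
  have ab: "a \<le> n" "b \<le> n"
    using assms unfolding a_def b_def by (simp_all add: less_imp_le)
  \<comment> \<open>compare integer representatives, where reduction modulo \<open>n\<close> commutes with signed sums\<close>
  have "int ((if s \<noteq> t then a + n - k else a + k) mod n) = int ((if s then i + n - b else i + b) mod n)"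
    unfolding int_dihedral_index[OF jk(2)] int_dihedral_index[OF ab(2)]
    unfolding a_def b_def int_dihedral_index[OF jk(1)] int_dihedral_index[OF jk(2)]
    by (cases s; cases t; simp add: mod_simps algebra_simps)
  then show ?thesis
    unfolding xyz dihedral_mult a_def[symmetric] b_def[symmetric] by auto
qed

lemma group_dihedral:
  assumes "n > 0"
  shows "group (dihedral n)"
proof (rule groupI)
  fix x y assume "x \<in> carrier (dihedral n)" "y \<in> carrier (dihedral n)"
  then show "x \<otimes>\<^bsub>dihedral n\<^esub> y \<in> carrier (dihedral n)"
    using assms by (cases x; cases y; simp add: dihedral_mult)
next
  show "\<one>\<^bsub>dihedral n\<^esub> \<in> carrier (dihedral n)"
    using assms by (simp add: dihedral_one)
next
  fix x assume "x \<in> carrier (dihedral n)"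
  then show "\<one>\<^bsub>dihedral n\<^esub> \<otimes>\<^bsub>dihedral n\<^esub> x = x"
    by (cases x; simp add: dihedral_mult dihedral_one)
next
  fix x assume x: "x \<in> carrier (dihedral n)"
  obtain i s where xe: "x = (i, s)" by (cases x)
  show "\<exists>y\<in>carrier (dihedral n). y \<otimes>\<^bsub>dihedral n\<^esub> x = \<one>\<^bsub>dihedral n\<^esub>"
  proof (cases s)
    case True
    then show ?thesis
      using x xe by (intro bexI[of _ "(i, True)"]) (auto simp: dihedral_mult dihedral_one)
  next
    case False
    have "((n - i) mod n + i) mod n = 0"
      using x xe by (simp add: mod_add_left_eq)
    then show ?thesis
      using False x xe assms
      by (intro bexI[of _ "((n - i) mod n, False)"]) (auto simp: dihedral_mult dihedral_one)
  qed
qed (use assms dihedral_mult_assoc in auto)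

context
  fixes n :: nat
  assumes n_pos: "n > 0"
begin

interpretation D: group "dihedral n"
  by (rule group_dihedral[OF n_pos])

lemma snd_dihedral_mult: "snd (x \<otimes>\<^bsub>dihedral n\<^esub> y) = (snd x \<noteq> snd y)"
  by (cases x; cases y; simp add: dihedral_mult)

lemma snd_dihedral_inv: "x \<in> carrier (dihedral n) \<Longrightarrow> snd (inv\<^bsub>dihedral n\<^esub> x) = snd x"
  using snd_dihedral_mult[of x "inv\<^bsub>dihedral n\<^esub> x"] D.r_inv[of x] by (simp add: dihedral_one)

lemma even_dihedral_mult_index:
  assumes "even n" "fst y \<le> n"
  shows "even (fst (x \<otimes>\<^bsub>dihedral n\<^esub> y) + fst x + fst y)"
proof -
  obtain i s j t where xy: "x = (i, s)" "y = (j, t)"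
    by (cases x; cases y)
  have mod_parity: "even (m mod n + m)" for m :: nat
    using assms(1) by (metis even_add even_iff_mod_2_eq_zero mod_mod_cancel)
  show ?thesis
  proof (cases s)
    case True
    have "j \<le> i + n"
      using assms xy by simp
    then show ?thesis
      using mod_parity[of "i + n - j"] assms True unfolding xy dihedral_mult by auto
  next
    case False
    then show ?thesis
      using mod_parity[of "i + j"] unfolding xy dihedral_mult by auto
  qed
qed

lemma dihedral_conjugate_snd:
  assumes "conjugate (dihedral n) g h"
  shows "snd h = snd g"
proof -
  from assms obtain x where x: "x \<in> carrier (dihedral n)"
    and h: "h = x \<otimes>\<^bsub>dihedral n\<^esub> g \<otimes>\<^bsub>dihedral n\<^esub> inv\<^bsub>dihedral n\<^esub> x"
    unfolding conjugate_def by auto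
  show ?thesis
    unfolding h snd_dihedral_mult snd_dihedral_inv[OF x] by auto
qed

lemma dihedral_conjugate_even_index:
  assumes "even n" "conjugate (dihedral n) g h"
  shows "even (fst g + fst h)"
proof -
  from assms(2) obtain x where x: "x \<in> carrier (dihedral n)" and g: "g \<in> carrier (dihedral n)"
    and h: "h = x \<otimes>\<^bsub>dihedral n\<^esub> g \<otimes>\<^bsub>dihedral n\<^esub> inv\<^bsub>dihedral n\<^esub> x"
    unfolding conjugate_def by auto
  have inv_le: "fst (inv\<^bsub>dihedral n\<^esub> x) \<le> n"
    using D.inv_closed[OF x] by auto
  have "even (fst x + fst (inv\<^bsub>dihedral n\<^esub> x))"
    using even_dihedral_mult_index[OF assms(1) inv_le, of x] D.r_inv[OF x] by (simp add: dihedral_one)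
  moreover have "fst g \<le> n"
    using g by auto
  ultimately show ?thesis
    using even_dihedral_mult_index[OF assms(1), of g x]
      even_dihedral_mult_index[OF assms(1) inv_le, of "x \<otimes>\<^bsub>dihedral n\<^esub> g"] h
    by presburger
qed

lemma dihedral_reflection_inv: "i < n \<Longrightarrow> inv\<^bsub>dihedral n\<^esub> (i, True) = (i, True)"
  by (rule D.inv_equality) (simp_all add: dihedral_mult dihedral_one)

lemma dihedral_conjugate_reflection:
  assumes "i < n" "k < n"
  shows "conjugate (dihedral n) (k, True) ((2 * i + n - k) mod n, True)"
proof -
  have "((i + n - k) mod n + i) mod n = (i + (i + n - k)) mod n"
    by (metis add.commute mod_add_right_eq)
  also have "i + (i + n - k) = 2 * i + n - k"
    using assms by simp
  finally have "(i, True) \<otimes>\<^bsub>dihedral n\<^esub> (k, True) \<otimes>\<^bsub>dihedral n\<^esub> inv\<^bsub>dihedral n\<^esub> (i, True)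
      = ((2 * i + n - k) mod n, True)"
    using assms by (simp add: dihedral_reflection_inv dihedral_mult)
  then show ?thesis
    unfolding conjugate_def using assms n_pos by (intro conjI bexI[of _ "(i, True)"]) auto
qed

text \<open>The reflection \<open>a\<^sup>i b\<close> conjugates \<open>a\<^sup>k b\<close> into \<open>a\<^sup>2\<^sup>i\<^sup>-\<^sup>k b\<close>, so it suffices to solve
  \<open>2 i = j + k\<close> modulo \<open>n\<close>.\<close>

lemma dihedral_conjugate_reflections:
  assumes "k < n" "j < n" "odd n \<or> even (k + j)"
  shows "conjugate (dihedral n) (k, True) (j, True)"
proof -
  obtain i where i: "i < n" "(2 * i) mod n = (j + k) mod n"
  proof (cases "odd n")
    case True
    define i where "i = ((j + k) * ((n + 1) div 2)) mod n"
    have "(2 * i) mod n = (j + k) * (2 * ((n + 1) div 2)) mod n"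
      unfolding i_def by (simp add: mod_mult_right_eq mult.commute mult.left_commute)
    also have "2 * ((n + 1) div 2) = n + 1"
      using True by presburger
    also have "(j + k) * (n + 1) = (j + k) + (j + k) * n"
      by (simp add: algebra_simps)
    finally show ?thesis
      using that[of i] n_pos unfolding i_def by simp
  next
    case False
    then have "2 * ((j + k) div 2) = j + k"
      using assms by presburger
    then show ?thesis
      using that[of "(j + k) div 2"] assms by auto
  qed
  have "int ((2 * i + n - k) mod n) = (int (2 * i) + int n - int k) mod int n"
    using assms by (simp add: zmod_int of_nat_diff)
  also have "\<dots> = (int ((2 * i) mod n) + int n - int k) mod int n"
    unfolding zmod_int by (metis add_diff_eq mod_add_left_eq)
  also have "\<dots> = (int ((j + k) mod n) + int n - int k) mod int n"
    using i by simp
  also have "\<dots> = ((int j + int k) + (int n - int k)) mod int n"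
    unfolding zmod_int of_nat_add by (metis add_diff_eq mod_add_left_eq)
  also have "\<dots> = (int j + int n) mod int n"
    by simp
  also have "\<dots> = int j"
    using assms by simp
  finally have "(2 * i + n - k) mod n = j"
    by linarith
  then show ?thesis
    using dihedral_conjugate_reflection[OF i(1) assms(1)] by simp
qed

lemma dihedral_int_pow_rotation:
  assumes "\<not> snd c" "c \<in> carrier (dihedral n)"
  shows "\<not> snd (c [^]\<^bsub>dihedral n\<^esub> (k::int))"
proof -
  have "subgroup {x \<in> carrier (dihedral n). \<not> snd x} (dihedral n)"
  proof (rule D.subgroupI)
    show "{x \<in> carrier (dihedral n). \<not> snd x} \<noteq> {}"
      using n_pos by (auto intro!: exI[of _ 0])
  qed (auto simp: snd_dihedral_mult snd_dihedral_inv simp del: dihedral_carrier)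
  from D.subgroup_int_pow_closed[OF this, of c k] assms show ?thesis
    by simp
qed

lemma dihedral_int_pow_reflection:
  assumes "snd c" "c \<in> carrier (dihedral n)"
  shows "c [^]\<^bsub>dihedral n\<^esub> (k::int) \<in> {\<one>\<^bsub>dihedral n\<^esub>, c}"
proof -
  obtain i where i: "c = (i, True)" "i < n"
    using assms by (cases c) auto
  have "subgroup {\<one>\<^bsub>dihedral n\<^esub>, c} (dihedral n)"
    by (rule D.subgroupI)
      (use i n_pos D.inv_one in \<open>auto simp: dihedral_reflection_inv dihedral_mult dihedral_one\<close>)
  from D.subgroup_int_pow_closed[OF this, of c k] assms show ?thesis
    by simp
qed

lemma dihedral_rotation_pow: "(Suc 0, False) [^]\<^bsub>dihedral n\<^esub> (k::nat) = (k mod n, False)"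
  by (induction k) (simp_all add: dihedral_mult dihedral_one mod_Suc_eq)

lemma enh_power_adj_dihedral_rotations:
  assumes "i < n" "j < n" "i \<noteq> j"
  shows "enh_power_adj (dihedral n) (i, False) (j, False)"
proof -
  have "(i, False) = (Suc 0, False) [^]\<^bsub>dihedral n\<^esub> int i"
    "(j, False) = (Suc 0, False) [^]\<^bsub>dihedral n\<^esub> int j"
    using assms by (simp_all add: int_pow_int dihedral_rotation_pow)
  moreover have "(Suc 0, False) \<in> carrier (dihedral n)" "(i, False) \<in> carrier (dihedral n)"
    "(j, False) \<in> carrier (dihedral n)"
    using assms by simp_all
  ultimately show ?thesis
    unfolding enh_power_adj_def using assms by blast
qed

text \<open>A reflection generates a subgroup of order two.\<close>

lemma enh_power_adj_dihedral_imp_rotations: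
  assumes "enh_power_adj (dihedral n) g h" "g \<noteq> \<one>\<^bsub>dihedral n\<^esub>" "h \<noteq> \<one>\<^bsub>dihedral n\<^esub>"
  shows "\<not> snd g \<and> \<not> snd h"
proof -
  from assms(1) obtain c i j where c: "c \<in> carrier (dihedral n)" and "g \<noteq> h"
    and gh: "g = c [^]\<^bsub>dihedral n\<^esub> (i::int)" "h = c [^]\<^bsub>dihedral n\<^esub> (j::int)"
    unfolding enh_power_adj_def by blast
  show ?thesis
  proof (cases "snd c")
    case True
    have "g = c" "h = c"
      using dihedral_int_pow_reflection[OF True c, of i] dihedral_int_pow_reflection[OF True c, of j]
        gh assms(2,3) by auto
    then show ?thesis
      using \<open>g \<noteq> h\<close> by simp
  next
    case False
    then show ?thesis
      using dihedral_int_pow_rotation[OF False c] gh by auto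
  qed
qed

lemma conj_super_enh_power_adj_dihedral_imp:
  assumes "conj_super_enh_power_adj (dihedral n) u v"
    and "u \<noteq> \<one>\<^bsub>dihedral n\<^esub>" "v \<noteq> \<one>\<^bsub>dihedral n\<^esub>"
  shows "snd u = snd v \<and> (snd u \<longrightarrow> odd n \<or> even (fst u + fst v))"
proof (cases "conjugate (dihedral n) u v")
  case True
  then show ?thesis
    using dihedral_conjugate_snd dihedral_conjugate_even_index by auto
next
  case False
  then obtain g h where g: "conjugate (dihedral n) u g" and h: "conjugate (dihedral n) v h"
    and "enh_power_adj (dihedral n) g h"
    using assms(1) unfolding conj_super_enh_power_adj_def by auto
  moreover have "g \<noteq> \<one>\<^bsub>dihedral n\<^esub>" "h \<noteq> \<one>\<^bsub>dihedral n\<^esub>"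
    using D.conjugate_one_iff[OF g] D.conjugate_one_iff[OF h] assms(2,3) by auto
  ultimately show ?thesis
    using enh_power_adj_dihedral_imp_rotations dihedral_conjugate_snd[OF g] dihedral_conjugate_snd[OF h]
    by auto
qed

lemma conj_super_enh_power_adj_dihedral_if:
  assumes u: "u \<in> carrier (dihedral n)" and v: "v \<in> carrier (dihedral n)"
    and uv: "u \<noteq> v" "u = (0, False) \<or> v = (0, False) \<or> (snd u = snd v \<and> (snd u \<longrightarrow> odd n \<or> even (fst u + fst v)))"
  shows "conj_super_enh_power_adj (dihedral n) u v"
proof -
  obtain i s j t where ij: "u = (i, s)" "v = (j, t)" "i < n" "j < n"
    using u v by (cases u; cases v) auto
  consider "u = \<one>\<^bsub>dihedral n\<^esub>" | "v = \<one>\<^bsub>dihedral n\<^esub>" | "\<not> s" "\<not> t" | "s" "t" "odd n \<or> even (i + j)"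
    using uv ij unfolding dihedral_one by auto
  then show ?thesis
  proof cases
    case 1
    then have "enh_power_adj (dihedral n) u v"
      using D.enh_power_adj_one[OF v] uv by auto
    then show ?thesis
      by (rule D.conj_super_enh_power_adj_if_enh_power_adj)
  next
    case 2
    then have "enh_power_adj (dihedral n) u v"
      using D.enh_power_adj_one[OF u] uv enh_power_adj_sym by auto
    then show ?thesis
      by (rule D.conj_super_enh_power_adj_if_enh_power_adj)
  next
    case 3
    then have "enh_power_adj (dihedral n) u v"
      using enh_power_adj_dihedral_rotations[of i j] uv ij by auto
    then show ?thesis
      by (rule D.conj_super_enh_power_adj_if_enh_power_adj)
  next
    case 4
    then show ?thesis
      using dihedral_conjugate_reflections[of i j] uv ij u v
      unfolding conj_super_enh_power_adj_def by auto
  qed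
qed

lemma conj_super_enh_power_adj_dihedral_iff:
  assumes "u \<in> carrier (dihedral n)" "v \<in> carrier (dihedral n)"
  shows "conj_super_enh_power_adj (dihedral n) u v \<longleftrightarrow> u \<noteq> v \<and>
    (u = (0, False) \<or> v = (0, False) \<or> (snd u = snd v \<and> (snd u \<longrightarrow> odd n \<or> even (fst u + fst v))))"
  using conj_super_enh_power_adj_dihedral_imp conj_super_enh_power_adj_dihedral_if[OF assms]
  unfolding conj_super_enh_power_adj_def dihedral_one by blast

end

section \<open>Matrices that are constant on the blocks of a partition\<close>

lemma index_mult_mat_mat:
  "i < N \<Longrightarrow> j < N \<Longrightarrow>
    (mat N N (\<lambda>(i, k). f i k) * mat N N (\<lambda>(k, j). g k j)) $$ (i, j) = (\<Sum>k = 0..<N. f i k * g k j)"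
  by (simp add: scalar_prod_def)

lemma sum_mult_delta_diff:
  fixes f :: "nat \<Rightarrow> 'a::comm_ring_1"
  assumes "finite A" "a \<in> A" "b \<in> A"
  shows "(\<Sum>j\<in>A. f j * (of_bool (j = a) - of_bool (j = b))) = f a - f b"
proof -
  have "A \<inter> {j. j = a} = {a}" "A \<inter> {j. j = b} = {b}"
    using assms by auto
  then show ?thesis
    using assms by (simp add: right_diff_distrib sum_subtractf)
qed

definition class_set :: "nat \<Rightarrow> (nat \<Rightarrow> nat) \<Rightarrow> nat \<Rightarrow> nat set" where
  "class_set N cl c = {j \<in> {0..<N}. cl j = c}"

text \<open>\<open>cl\<close> partitions the indices \<open>{0..<N}\<close> into \<open>K\<close> classes with chosen members \<open>rep c\<close>, and
  \<open>extra\<close> enumerates further indices by \<open>K..<N\<close>. The columns of \<open>basis_mat\<close> are the class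
  indicators and the differences \<open>e (rep c) - e v\<close> of unit vectors for \<open>v = extra l\<close> in class \<open>c\<close>:
  \<open>class_mat\<close> acts on the former through \<open>quotient_mat\<close> and multiplies the latter by \<open>-w c c\<close>.
  That these columns form a basis, i.e. that \<open>extra\<close> hits every non-representative, follows
  from the left inverse \<open>basis_inv_mat\<close>.\<close>

locale partition_basis =
  fixes N K :: nat and cl rep extra :: "nat \<Rightarrow> nat" and w :: "nat \<Rightarrow> nat \<Rightarrow> 'a :: field_char_0"
  assumes cl_less: "\<And>i. i < N \<Longrightarrow> cl i < K"
    and rep: "\<And>c. c < K \<Longrightarrow> rep c < N \<and> cl (rep c) = c"
    and extra: "\<And>l. K \<le> l \<Longrightarrow> l < N \<Longrightarrow> extra l < N \<and> extra l \<noteq> rep (cl (extra l))"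
    and inj_on_extra: "inj_on extra {K..<N}"
    and K_le_N: "K \<le> N"
begin

definition class_size :: "nat \<Rightarrow> nat" where
  "class_size c = card (class_set N cl c)"

definition class_of_col :: "nat \<Rightarrow> nat" where
  "class_of_col k = (if k < K then k else cl (extra k))"

definition basis_entry :: "nat \<Rightarrow> nat \<Rightarrow> 'a" where
  "basis_entry j l = (if l < K then of_bool (cl j = l)
     else of_bool (j = rep (cl (extra l))) - of_bool (j = extra l))"

definition basis_inv_entry :: "nat \<Rightarrow> nat \<Rightarrow> 'a" where
  "basis_inv_entry k j = of_bool (cl j = class_of_col k) / of_nat (class_size (class_of_col k))
     - (if K \<le> k then of_bool (j = extra k) else 0)"

definition basis_mat :: "'a mat" where
  "basis_mat = mat N N (\<lambda>(j, l). basis_entry j l)"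

definition basis_inv_mat :: "'a mat" where
  "basis_inv_mat = mat N N (\<lambda>(k, j). basis_inv_entry k j)"

definition class_mat :: "'a mat" where
  "class_mat = mat N N (\<lambda>(i, j). if i = j then 0 else w (cl i) (cl j))"

definition quotient_mat :: "'a mat" where
  "quotient_mat = mat K K (\<lambda>(k, l). w k l * (of_nat (class_size l) - of_bool (k = l)))"

definition extra_diag_mat :: "'a mat" where
  "extra_diag_mat = mat (N - K) (N - K)
     (\<lambda>(i, j). if i = j then - w (cl (extra (K + i))) (cl (extra (K + i))) else 0)"

definition block_entry :: "nat \<Rightarrow> nat \<Rightarrow> 'a" where
  "block_entry k l = (if k < K \<and> l < K then w k l * (of_nat (class_size l) - of_bool (k = l))
     else if K \<le> k \<and> k = l then - w (cl (extra l)) (cl (extra l)) else 0)"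

definition block_mat :: "'a mat" where
  "block_mat = mat N N (\<lambda>(k, l). block_entry k l)"

lemma finite_class_set: "finite (class_set N cl c)"
  by (simp add: class_set_def)

lemma class_size_pos: "c < K \<Longrightarrow> class_size c > 0"
  using rep[of c] finite_class_set[of c] by (auto simp: class_size_def class_set_def card_gt_0_iff)

lemma sum_mult_class_indicator:
  fixes f :: "nat \<Rightarrow> 'a"
  shows "(\<Sum>j = 0..<N. f j * of_bool (cl j = c)) = (\<Sum>j\<in>class_set N cl c. f j)"
proof -
  have "{0..<N} \<inter> {j. cl j = c} = class_set N cl c"
    by (auto simp: class_set_def)
  then show ?thesis
    using sum_mult_of_bool_eq[of "{0..<N}" f "\<lambda>j. cl j = c"] by simp
qed

lemma of_nat_card_class_set_remove:
  assumes "i < N"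
  shows "of_nat (card (class_set N cl c \<inter> {j. i \<noteq> j})) = (of_nat (class_size c) - of_bool (cl i = c) :: 'a)"
proof -
  have "class_set N cl c \<inter> {j. i \<noteq> j} = class_set N cl c - {i}"
    by auto
  moreover have "i \<in> class_set N cl c \<Longrightarrow> card (class_set N cl c) \<ge> 1"
    using finite_class_set[of c] by (metis One_nat_def Suc_leI card_gt_0_iff empty_iff)
  ultimately show ?thesis
    using assms finite_class_set[of c]
    by (auto simp: card_Diff_singleton_if class_size_def class_set_def of_nat_diff)
qed

lemma basis_inv_mult_basis_class_col:
  assumes "k < N" "l < K"
  shows "(\<Sum>j = 0..<N. basis_inv_entry k j * basis_entry j l) = of_bool (k = l)"
proof -
  let ?c = "class_of_col k"
  have "(\<Sum>j = 0..<N. basis_inv_entry k j * basis_entry j l) = (\<Sum>j\<in>class_set N cl l. basis_inv_entry k j)"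
    using assms(2) by (simp add: basis_entry_def sum_mult_class_indicator)
  also have "\<dots> = (\<Sum>j\<in>class_set N cl l. of_bool (l = ?c) / of_nat (class_size ?c))
      - (\<Sum>j\<in>class_set N cl l. if K \<le> k then of_bool (j = extra k) else 0)"
    unfolding basis_inv_entry_def sum_subtractf by (intro arg_cong2[where f = minus] sum.cong) (auto simp: class_set_def)
  also have "(\<Sum>j\<in>class_set N cl l. of_bool (l = ?c) / of_nat (class_size ?c)) = (of_bool (l = ?c) :: 'a)"
    using class_size_pos[OF assms(2)] by (cases "l = ?c") (simp_all add: class_size_def[symmetric])
  also have "(\<Sum>j\<in>class_set N cl l. if K \<le> k then of_bool (j = extra k) else 0)
      = (if K \<le> k then of_bool (extra k \<in> class_set N cl l) else (0 :: 'a))"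
    by (simp add: of_bool_def finite_class_set)
  also have "\<dots> = (if K \<le> k then of_bool (cl (extra k) = l) else 0)"
    using extra[of k] assms(1) by (auto simp: class_set_def)
  also have "of_bool (l = ?c) - (if K \<le> k then of_bool (cl (extra k) = l) else 0) = (of_bool (k = l) :: 'a)"
    using assms(2) by (auto simp: class_of_col_def)
  finally show ?thesis .
qed

lemma basis_inv_mult_basis_extra_col:
  assumes "k < N" "K \<le> l" "l < N"
  shows "(\<Sum>j = 0..<N. basis_inv_entry k j * basis_entry j l) = of_bool (k = l)"
proof -
  define v where "v = extra l"
  have v: "v < N" "v \<noteq> rep (cl v)" "rep (cl v) < N" "cl (rep (cl v)) = cl v"
    using extra[OF assms(2,3)] rep[OF cl_less] unfolding v_def by auto
  have "(\<Sum>j = 0..<N. basis_inv_entry k j * basis_entry j l)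
      = basis_inv_entry k (rep (cl v)) - basis_inv_entry k v"
    using assms v by (simp add: basis_entry_def v_def[symmetric] sum_mult_delta_diff)
  also have "\<dots> = (if K \<le> k then of_bool (v = extra k) - of_bool (rep (cl v) = extra k) else 0)"
    using v by (simp add: basis_inv_entry_def)
  also have "\<dots> = of_bool (k = l)"
  proof (cases "K \<le> k")
    case True
    then have "rep (cl v) \<noteq> extra k"
      using extra[OF True assms(1)] v by metis
    moreover have "v = extra k \<longleftrightarrow> k = l"
      using inj_on_extra True assms unfolding v_def inj_on_def by auto
    ultimately show ?thesis
      using True by simp
  qed (use assms in auto)
  finally show ?thesis .
qed

lemma basis_inv_mult_basis: "basis_inv_mat * basis_mat = 1\<^sub>m N"
proof (rule eq_matI)
  fix k l assume "k < dim_row (1\<^sub>m N)" "l < dim_col (1\<^sub>m N)"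
  then have kl: "k < N" "l < N"
    by auto
  then show "(basis_inv_mat * basis_mat) $$ (k, l) = 1\<^sub>m N $$ (k, l)"
    unfolding basis_inv_mat_def basis_mat_def index_mult_mat_mat[OF kl]
    using basis_inv_mult_basis_class_col basis_inv_mult_basis_extra_col
    by (cases "l < K") auto
qed (auto simp: basis_inv_mat_def basis_mat_def)

lemma class_mat_mult_basis_class_col:
  assumes "i < N" "l < K"
  shows "(\<Sum>j = 0..<N. (if i = j then 0 else w (cl i) (cl j)) * basis_entry j l)
    = w (cl i) l * (of_nat (class_size l) - of_bool (cl i = l))"
proof -
  have "(\<Sum>j = 0..<N. (if i = j then 0 else w (cl i) (cl j)) * basis_entry j l)
      = (\<Sum>j\<in>class_set N cl l. if i = j then 0 else w (cl i) (cl j))"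
    using assms(2) by (simp add: basis_entry_def sum_mult_class_indicator)
  also have "\<dots> = (\<Sum>j\<in>class_set N cl l. w (cl i) l * of_bool (i \<noteq> j))"
    by (rule sum.cong) (auto simp: class_set_def)
  also have "\<dots> = w (cl i) l * of_nat (card (class_set N cl l \<inter> {j. i \<noteq> j}))"
    by (simp add: sum_distrib_left[symmetric] finite_class_set)
  finally show ?thesis
    using of_nat_card_class_set_remove[OF assms(1)] by simp
qed

lemma class_mat_mult_basis_extra_col:
  assumes "i < N" "K \<le> l" "l < N"
  shows "(\<Sum>j = 0..<N. (if i = j then 0 else w (cl i) (cl j)) * basis_entry j l)
    = basis_entry i l * - w (cl (extra l)) (cl (extra l))"
proof -
  define v where "v = extra l"
  have v: "v < N" "v \<noteq> rep (cl v)" "rep (cl v) < N" "cl (rep (cl v)) = cl v"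
    using extra[OF assms(2,3)] rep[OF cl_less] unfolding v_def by auto
  have "(\<Sum>j = 0..<N. (if i = j then 0 else w (cl i) (cl j)) * basis_entry j l)
      = (if i = rep (cl v) then 0 else w (cl i) (cl v)) - (if i = v then 0 else w (cl i) (cl v))"
    using assms v by (simp add: basis_entry_def v_def[symmetric] sum_mult_delta_diff)
  also have "\<dots> = basis_entry i l * - w (cl v) (cl v)"
    using assms v by (auto simp: basis_entry_def v_def[symmetric])
  finally show ?thesis
    unfolding v_def .
qed

lemma basis_mult_block_class_col:
  assumes "i < N" "l < K"
  shows "(\<Sum>j = 0..<N. basis_entry i j * block_entry j l)
    = w (cl i) l * (of_nat (class_size l) - of_bool (cl i = l))"
proof -
  have "(\<Sum>j = 0..<N. basis_entry i j * block_entry j l)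
      = (\<Sum>j = 0..<N. if j = cl i then w j l * (of_nat (class_size l) - of_bool (j = l)) else 0)"
    using assms cl_less[OF assms(1)] by (intro sum.cong) (auto simp: basis_entry_def block_entry_def)
  then show ?thesis
    using cl_less[OF assms(1)] K_le_N by simp
qed

lemma basis_mult_block_extra_col:
  assumes "i < N" "K \<le> l" "l < N"
  shows "(\<Sum>j = 0..<N. basis_entry i j * block_entry j l) = basis_entry i l * - w (cl (extra l)) (cl (extra l))"
proof -
  have "(\<Sum>j = 0..<N. basis_entry i j * block_entry j l)
      = (\<Sum>j = 0..<N. if j = l then basis_entry i l * - w (cl (extra l)) (cl (extra l)) else 0)"
    using assms by (intro sum.cong) (auto simp: block_entry_def)
  then show ?thesis
    using assms by simp
qed

lemma class_mat_mult_basis: "class_mat * basis_mat = basis_mat * block_mat"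
proof (rule eq_matI)
  fix i l assume "i < dim_row (basis_mat * block_mat)" "l < dim_col (basis_mat * block_mat)"
  then have il: "i < N" "l < N"
    by (auto simp: basis_mat_def block_mat_def)
  then show "(class_mat * basis_mat) $$ (i, l) = (basis_mat * block_mat) $$ (i, l)"
    unfolding class_mat_def basis_mat_def block_mat_def index_mult_mat_mat[OF il]
    using class_mat_mult_basis_class_col basis_mult_block_class_col
      class_mat_mult_basis_extra_col basis_mult_block_extra_col
    by (cases "l < K") auto
qed (auto simp: class_mat_def basis_mat_def block_mat_def)

lemma similar_class_mat_block_mat: "similar_mat class_mat block_mat"
proof -
  have carrier: "class_mat \<in> carrier_mat N N" "block_mat \<in> carrier_mat N N"
    "basis_mat \<in> carrier_mat N N" "basis_inv_mat \<in> carrier_mat N N"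
    by (auto simp: class_mat_def block_mat_def basis_mat_def basis_inv_mat_def)
  have inv: "basis_mat * basis_inv_mat = 1\<^sub>m N"
    by (rule mat_mult_left_right_inverse[OF carrier(4,3) basis_inv_mult_basis])
  have "class_mat = class_mat * (basis_mat * basis_inv_mat)"
    using carrier by (simp add: inv)
  also have "\<dots> = (class_mat * basis_mat) * basis_inv_mat"
    using carrier by (simp add: assoc_mult_mat[of _ N N _ N _ N])
  also have "\<dots> = basis_mat * block_mat * basis_inv_mat"
    by (simp add: class_mat_mult_basis)
  finally show ?thesis
    using carrier inv basis_inv_mult_basis by (intro similar_matI[of _ _ basis_mat basis_inv_mat N]) auto
qed

lemma block_mat_eq_four_block_mat:
  "block_mat = four_block_mat quotient_mat (0\<^sub>m K (N - K)) (0\<^sub>m (N - K) K) extra_diag_mat"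
  by (rule eq_matI) (use K_le_N in \<open>auto simp: block_mat_def block_entry_def quotient_mat_def extra_diag_mat_def\<close>)

lemma char_poly_block_mat: "char_poly block_mat = char_poly quotient_mat * char_poly extra_diag_mat"
proof -
  let ?cm = "\<lambda>A. [:0, 1:] \<cdot>\<^sub>m 1\<^sub>m (dim_row A) + map_mat (\<lambda>a. [:- a:]) (A :: 'a mat)"
  have carrier: "quotient_mat \<in> carrier_mat K K" "extra_diag_mat \<in> carrier_mat (N - K) (N - K)"
    by (auto simp: quotient_mat_def extra_diag_mat_def)
  have "char_poly block_mat = det (?cm block_mat)"
    unfolding char_poly_defs ..
  also have "?cm block_mat = four_block_mat (?cm quotient_mat) (0\<^sub>m K (N - K)) (0\<^sub>m (N - K) K) (?cm extra_diag_mat)"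
    unfolding block_mat_eq_four_block_mat
    by (rule eq_matI) (use carrier K_le_N in \<open>auto simp: one_poly_def\<close>)
  also have "det \<dots> = det (?cm quotient_mat) * det (?cm extra_diag_mat)"
    by (rule det_four_block_mat_lower_left_zero) (use carrier in auto)
  finally show ?thesis
    unfolding char_poly_defs .
qed

lemma char_poly_extra_diag_mat:
  "char_poly extra_diag_mat = (\<Prod>l\<leftarrow>[K..<N]. [:w (cl (extra l)) (cl (extra l)), 1:])"
proof -
  have carrier: "extra_diag_mat \<in> carrier_mat (N - K) (N - K)"
    by (simp add: extra_diag_mat_def)
  have triangular: "upper_triangular extra_diag_mat"
    by (auto simp: upper_triangular_def extra_diag_mat_def)
  have "diag_mat extra_diag_mat = map (\<lambda>i. - w (cl (extra (K + i))) (cl (extra (K + i)))) [0..<N - K]"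
    unfolding diag_mat_def by (rule map_cong) (auto simp: extra_diag_mat_def)
  moreover have "[K..<N] = map (\<lambda>i. K + i) [0..<N - K]"
    using K_le_N by (simp add: map_add_upt add.commute)
  ultimately show ?thesis
    unfolding char_poly_upper_triangular[OF carrier triangular] by (simp add: comp_def)
qed

lemma poly_char_poly_quotient_mat:
  "poly (char_poly quotient_mat) x
    = det (mat K K (\<lambda>(k, l). of_bool (k = l) * x - w k l * (of_nat (class_size l) - of_bool (k = l))))"
proof -
  have "quotient_mat \<in> carrier_mat K K"
    by (simp add: quotient_mat_def)
  then have "poly (char_poly quotient_mat) x = det (- char_matrix quotient_mat x)"
    by (rule char_poly_matrix)
  also have "- char_matrix quotient_mat x
      = mat K K (\<lambda>(k, l). of_bool (k = l) * x - w k l * (of_nat (class_size l) - of_bool (k = l)))"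
    by (rule eq_matI) (auto simp: char_matrix_def quotient_mat_def)
  finally show ?thesis .
qed

lemma char_poly_quotient_mat_nonzero: "char_poly quotient_mat \<noteq> 0"
proof -
  have "quotient_mat \<in> carrier_mat K K"
    by (simp add: quotient_mat_def)
  from degree_monic_char_poly[OF this] show ?thesis
    by auto
qed

theorem char_poly_class_mat:
  "char_poly class_mat = char_poly quotient_mat * (\<Prod>l\<leftarrow>[K..<N]. [:w (cl (extra l)) (cl (extra l)), 1:])"
  using char_poly_similar[OF similar_class_mat_block_mat] char_poly_block_mat char_poly_extra_diag_mat
  by simp

end

section \<open>Determinants of small matrices\<close>

lemma det_dim_2:
  assumes "A \<in> carrier_mat 2 2"
  shows "det A = A $$ (0, 0) * A $$ (1, 1) - A $$ (0, 1) * A $$ (1, 0)"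
proof -
  have "det A = (\<Sum>i<2. A $$ (i, 0) * cofactor A i 0)"
    by (rule laplace_expansion_column[OF assms]) simp
  also have "\<dots> = A $$ (0, 0) * cofactor A 0 0 + A $$ (1, 0) * cofactor A 1 0"
    by (simp add: numeral_2_eq_2)
  also have "cofactor A 0 0 = A $$ (1, 1)"
    unfolding cofactor_def using assms by (subst det_single) (auto simp: mat_delete_def)
  also have "cofactor A 1 0 = - A $$ (0, 1)"
    unfolding cofactor_def using assms by (subst det_single) (auto simp: mat_delete_def)
  finally show ?thesis
    by (simp add: algebra_simps)
qed

lemma det_dim_3:
  assumes "A \<in> carrier_mat 3 3"
  shows "det A = A $$ (0, 0) * (A $$ (1, 1) * A $$ (2, 2) - A $$ (1, 2) * A $$ (2, 1))
     - A $$ (1, 0) * (A $$ (0, 1) * A $$ (2, 2) - A $$ (0, 2) * A $$ (2, 1))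
     + A $$ (2, 0) * (A $$ (0, 1) * A $$ (1, 2) - A $$ (0, 2) * A $$ (1, 1))"
proof -
  have "det A = (\<Sum>i<3. A $$ (i, 0) * cofactor A i 0)"
    by (rule laplace_expansion_column[OF assms]) simp
  also have "\<dots> = A $$ (0, 0) * cofactor A 0 0 + A $$ (1, 0) * cofactor A 1 0 + A $$ (2, 0) * cofactor A 2 0"
    by (simp add: numeral_eq_Suc)
  also have "cofactor A 0 0 = A $$ (1, 1) * A $$ (2, 2) - A $$ (1, 2) * A $$ (2, 1)"
    unfolding cofactor_def using assms by (subst det_dim_2) (auto simp: mat_delete_def numeral_2_eq_2)
  also have "cofactor A 1 0 = - (A $$ (0, 1) * A $$ (2, 2) - A $$ (0, 2) * A $$ (2, 1))"
    unfolding cofactor_def using assms by (subst det_dim_2) (auto simp: mat_delete_def numeral_2_eq_2)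
  also have "cofactor A 2 0 = A $$ (0, 1) * A $$ (1, 2) - A $$ (0, 2) * A $$ (1, 1)"
    unfolding cofactor_def using assms by (subst det_dim_2) (auto simp: mat_delete_def numeral_2_eq_2)
  finally show ?thesis
    by (simp add: algebra_simps)
qed

lemma det_dim_4:
  assumes "A \<in> carrier_mat 4 4"
  shows "det A = A $$ (0, 0) * det (mat_delete A 0 0) - A $$ (1, 0) * det (mat_delete A 1 0)
     + A $$ (2, 0) * det (mat_delete A 2 0) - A $$ (3, 0) * det (mat_delete A 3 0)"
proof -
  have "det A = (\<Sum>i<4. A $$ (i, 0) * cofactor A i 0)"
    by (rule laplace_expansion_column[OF assms]) simp
  then show ?thesis
    by (simp add: numeral_eq_Suc cofactor_def)
qed

lemma mat_delete_mat:
  "mat_delete (mat m m f) i j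
    = mat (m - 1) (m - 1) (\<lambda>(i', j'). f (if i' < i then i' else Suc i', if j' < j then j' else Suc j'))"
  by (rule eq_matI) (auto simp: mat_delete_def)

lemma det_arrowhead_3:
  assumes "f (1, 2) = 0" "f (2, 1) = 0"
  shows "det (mat 3 3 f) = f (0, 0) * f (1, 1) * f (2, 2)
    - f (0, 1) * f (1, 0) * f (2, 2) - f (0, 2) * f (2, 0) * f (1, 1)"
  using assms by (simp add: det_dim_3[OF mat_carrier] algebra_simps)

lemma det_arrowhead_4:
  assumes "f (1, 2) = 0" "f (1, 3) = 0" "f (2, 1) = 0" "f (2, 3) = 0" "f (3, 1) = 0" "f (3, 2) = 0"
  shows "det (mat 4 4 f) = f (0, 0) * f (1, 1) * f (2, 2) * f (3, 3)
    - f (0, 1) * f (1, 0) * f (2, 2) * f (3, 3) - f (0, 2) * f (2, 0) * f (1, 1) * f (3, 3)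
    - f (0, 3) * f (3, 0) * f (1, 1) * f (2, 2)"
  unfolding det_dim_4[OF mat_carrier] mat_delete_mat
  using assms by (simp add: det_dim_3[OF mat_carrier] algebra_simps flip: numeral_2_eq_2)

section \<open>The conjugacy super enhanced power graph of the dihedral group\<close>

definition dih_vertices :: "nat \<Rightarrow> (nat \<times> bool) list" where
  "dih_vertices n = map (\<lambda>k. (k, False)) [0..<n] @ map (\<lambda>k. (k, True)) [0..<n]"

text \<open>Indices \<open>0..<2 n\<close> of \<open>dih_vertices n\<close> are grouped into the identity, the non-trivial rotations
  and the conjugacy classes of reflections: all of them for odd \<open>n\<close>, those \<open>a\<^sup>k b\<close> with \<open>k\<close> even
  resp. odd for even \<open>n\<close>.\<close>

definition dih_class :: "nat \<Rightarrow> nat \<Rightarrow> nat" where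
  "dih_class n i = (if i = 0 then 0 else if i < n then 1 else if odd n \<or> even (i - n) then 2 else 3)"

definition dih_degree :: "nat \<Rightarrow> nat \<Rightarrow> nat" where
  "dih_degree n c = (if c = 0 then 2 * n - 1 else card (class_set (2 * n) (dih_class n) c))"

definition dih_weight :: "nat \<Rightarrow> nat \<Rightarrow> nat \<Rightarrow> complex" where
  "dih_weight n c d = complex_of_real (if c = 0 \<or> d = 0 \<or> c = d
     then sqrt (real (dih_degree n c) ^ 2 + real (dih_degree n d) ^ 2) else 0)"

definition dih_num_classes :: "nat \<Rightarrow> nat" where
  "dih_num_classes n = (if odd n then 3 else 4)"

definition dih_rep :: "nat \<Rightarrow> nat \<Rightarrow> nat" where
  "dih_rep n c = (if c = 0 then 0 else if c = 1 then 1 else if c = 2 then n else n + 1)"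

text \<open>The vertices other than the class representatives: the rotations \<open>a\<^sup>2, \<dots>, a\<^sup>n\<^sup>-\<^sup>1\<close>, then the
  reflections after the representatives.\<close>

definition dih_extra :: "nat \<Rightarrow> nat \<Rightarrow> nat" where
  "dih_extra n l = (if l < n + dih_num_classes n - 2 then l - (dih_num_classes n - 2) else l)"

lemma length_dih_vertices [simp]: "length (dih_vertices n) = 2 * n"
  by (simp add: dih_vertices_def)

lemma nth_dih_vertices: "i < 2 * n \<Longrightarrow> dih_vertices n ! i = (if i < n then (i, False) else (i - n, True))"
  by (auto simp: dih_vertices_def nth_append)

lemma set_dih_vertices: "set (dih_vertices n) = carrier (dihedral n)"
  by (auto simp: dih_vertices_def)

lemma dih_class_eq_0_iff: "dih_class n i = 0 \<longleftrightarrow> i = 0"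
  by (simp add: dih_class_def)

lemma dih_class_0 [simp]: "dih_class n 0 = 0"
  by (simp add: dih_class_def)

lemma conj_super_enh_power_adj_dih_vertices_iff:
  assumes "n > 0" "i < 2 * n" "j < 2 * n"
  shows "conj_super_enh_power_adj (dihedral n) (dih_vertices n ! i) (dih_vertices n ! j) \<longleftrightarrow>
    i \<noteq> j \<and> (dih_class n i = 0 \<or> dih_class n j = 0 \<or> dih_class n i = dih_class n j)"
proof -
  have carrier: "dih_vertices n ! i \<in> carrier (dihedral n)" "dih_vertices n ! j \<in> carrier (dihedral n)"
    using assms nth_mem[of _ "dih_vertices n"] unfolding set_dih_vertices[symmetric] by auto
  show ?thesis
    unfolding conj_super_enh_power_adj_dihedral_iff[OF assms(1) carrier] using assms
    by (auto simp: nth_dih_vertices dih_class_def split: if_splits)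
qed

lemma graph_deg_dih_vertices:
  assumes n: "n > 0" and i: "i < 2 * n"
  shows "graph_deg (set (dih_vertices n)) (conj_super_enh_power_adj (dihedral n)) (dih_vertices n ! i)
    = dih_degree n (dih_class n i)"
proof -
  let ?adj = "conj_super_enh_power_adj (dihedral n)"
  let ?C = "class_set (2 * n) (dih_class n) (dih_class n i)"
  let ?S = "{j \<in> {0..<2 * n}. i \<noteq> j \<and> (dih_class n i = 0 \<or> dih_class n j = 0 \<or> dih_class n i = dih_class n j)}"
  have "{v \<in> set (dih_vertices n). ?adj (dih_vertices n ! i) v} = (!) (dih_vertices n) ` ?S"
    using conj_super_enh_power_adj_dih_vertices_iff[OF n i] by (auto simp: set_conv_nth)
  moreover have "inj_on ((!) (dih_vertices n)) ?S"
    by (auto simp: inj_on_def nth_dih_vertices split: if_splits)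
  ultimately have "graph_deg (set (dih_vertices n)) ?adj (dih_vertices n ! i) = card ?S"
    unfolding graph_deg_def by (simp add: card_image)
  also have "card ?S = dih_degree n (dih_class n i)"
  proof (cases "i = 0")
    case True
    then have "?S = {1..<2 * n}"
      by (auto simp: dih_class_eq_0_iff)
    then show ?thesis
      using True by (simp add: dih_degree_def dih_class_def)
  next
    case False
    then have "?S = insert 0 (?C - {i})" "0 \<notin> ?C - {i}"
      using n by (auto simp: class_set_def dih_class_eq_0_iff)
    moreover have "i \<in> ?C" "finite ?C"
      using i by (auto simp: class_set_def)
    ultimately have "card ?S = Suc (card ?C - 1)"
      by (simp add: card_Diff_singleton)
    also have "\<dots> = card ?C"
      using \<open>i \<in> ?C\<close> \<open>finite ?C\<close> card_gt_0_iff[of ?C] by auto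
    finally show ?thesis
      using False by (simp add: dih_degree_def dih_class_eq_0_iff)
  qed
  finally show ?thesis .
qed

lemma dih_degree_0: "dih_degree n 0 = 2 * n - 1"
  by (simp add: dih_degree_def)

lemma class_set_dih_class_0: "n > 0 \<Longrightarrow> class_set (2 * n) (dih_class n) 0 = {0}"
  by (auto simp: class_set_def dih_class_def)

lemma class_set_dih_class_1: "class_set (2 * n) (dih_class n) 1 = {1..<n}"
  by (auto simp: class_set_def dih_class_def)

lemma dih_degree_1: "dih_degree n 1 = n - 1"
  using class_set_dih_class_1[of n] by (simp add: dih_degree_def)

lemma class_set_dih_class_2_odd: "odd n \<Longrightarrow> class_set (2 * n) (dih_class n) 2 = {n..<2 * n}"
  by (auto simp: class_set_def dih_class_def)

lemma dih_degree_2_odd: "odd n \<Longrightarrow> dih_degree n 2 = n"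
  by (simp add: dih_degree_def class_set_dih_class_2_odd)

lemma class_set_dih_class_even:
  assumes "even n" "r < 2"
  shows "class_set (2 * n) (dih_class n) (2 + r) = (\<lambda>t. n + r + 2 * t) ` {..<n div 2}"
proof
  show "class_set (2 * n) (dih_class n) (2 + r) \<subseteq> (\<lambda>t. n + r + 2 * t) ` {..<n div 2}"
  proof
    fix x assume "x \<in> class_set (2 * n) (dih_class n) (2 + r)"
    then have "n \<le> x" "x < 2 * n" "even (x - n) \<longleftrightarrow> r = 0"
      using assms by (auto simp: class_set_def dih_class_def split: if_splits)
    then have "x = n + r + 2 * ((x - n) div 2)" "(x - n) div 2 < n div 2"
      using assms by presburger+
    then show "x \<in> (\<lambda>t. n + r + 2 * t) ` {..<n div 2}"
      by blast
  qed
next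
  show "(\<lambda>t. n + r + 2 * t) ` {..<n div 2} \<subseteq> class_set (2 * n) (dih_class n) (2 + r)"
  proof
    fix x assume "x \<in> (\<lambda>t. n + r + 2 * t) ` {..<n div 2}"
    then obtain t where "t < n div 2" "x = n + r + 2 * t"
      by auto
    then have "n \<le> x" "x < 2 * n" "x \<noteq> 0" "even (x - n) \<longleftrightarrow> r = 0"
      using assms by presburger+
    then show "x \<in> class_set (2 * n) (dih_class n) (2 + r)"
      using assms by (auto simp: class_set_def dih_class_def)
  qed
qed

lemma dih_degree_even:
  assumes "even n" "c = 2 \<or> c = 3"
  shows "dih_degree n c = n div 2"
proof -
  define r where "r = c - 2"
  then have "r < 2" "c = 2 + r"
    using assms(2) by auto
  moreover have "inj (\<lambda>t::nat. n + r + 2 * t)"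
    by (auto simp: inj_def)
  ultimately show ?thesis
    using class_set_dih_class_even[OF assms(1)] by (simp add: dih_degree_def card_image inj_on_subset)
qed

lemma dih_weight_sym: "dih_weight n c d = dih_weight n d c"
  by (auto simp: dih_weight_def add.commute)

lemma dih_weight_eq_0: "c \<noteq> 0 \<Longrightarrow> d \<noteq> 0 \<Longrightarrow> c \<noteq> d \<Longrightarrow> dih_weight n c d = 0"
  by (simp add: dih_weight_def)

lemma dih_weight_diag: "dih_weight n c c = of_nat (dih_degree n c) * complex_of_real (sqrt 2)"
proof -
  have "sqrt (real (dih_degree n c) ^ 2 + real (dih_degree n c) ^ 2) = real (dih_degree n c) * sqrt 2"
    by (simp add: real_sqrt_mult flip: mult_2)
  then show ?thesis
    by (simp add: dih_weight_def)
qed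

lemma dih_weight_hub_sq:
  "dih_weight n 0 c * dih_weight n 0 c = of_nat (2 * n - 1) ^ 2 + of_nat (dih_degree n c) ^ 2"
proof -
  have "dih_weight n 0 c * dih_weight n 0 c
      = complex_of_real (sqrt (real (2 * n - 1) ^ 2 + real (dih_degree n c) ^ 2) ^ 2)"
    by (simp add: dih_weight_def dih_degree_0 power2_eq_square flip: of_real_mult)
  then show ?thesis
    by simp
qed

lemma partition_basis_dihedral:
  assumes "n \<ge> 3"
  shows "partition_basis (2 * n) (dih_num_classes n) (dih_class n) (dih_rep n) (dih_extra n)"
proof
  fix i assume "i < 2 * n"
  then show "dih_class n i < dih_num_classes n"
    by (auto simp: dih_class_def dih_num_classes_def)
next
  fix c assume "c < dih_num_classes n"
  then show "dih_rep n c < 2 * n \<and> dih_class n (dih_rep n c) = c"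
    using assms by (auto simp: dih_class_def dih_num_classes_def dih_rep_def)
next
  fix l assume l: "dih_num_classes n \<le> l" "l < 2 * n"
  show "dih_extra n l < 2 * n \<and> dih_extra n l \<noteq> dih_rep n (dih_class n (dih_extra n l))"
  proof (cases "l < n + dih_num_classes n - 2")
    case True
    then have "2 \<le> dih_extra n l" "dih_extra n l < n"
      using l by (auto simp: dih_extra_def dih_num_classes_def)
    then show ?thesis
      by (simp add: dih_class_def dih_rep_def)
  next
    case False
    then have "dih_extra n l = l" "n + dih_num_classes n - 2 \<le> l"
      by (simp_all add: dih_extra_def)
    moreover have "dih_class n l \<in> {2, 3}" "dih_class n l = 3 \<Longrightarrow> even n"
      using l calculation(2) assms by (auto simp: dih_class_def dih_num_classes_def split: if_splits)
    ultimately show ?thesis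
      using l by (auto simp: dih_rep_def dih_num_classes_def split: if_splits)
  qed
next
  show "inj_on (dih_extra n) {dih_num_classes n..<2 * n}"
    using assms by (auto simp: inj_on_def dih_num_classes_def dih_extra_def split: if_splits)
qed (use assms in \<open>simp add: dih_num_classes_def\<close>)

lemma sombor_matrix_dih_vertices:
  assumes "n \<ge> 3"
  shows "map_mat complex_of_real (sombor_matrix (dih_vertices n) (conj_super_enh_power_adj (dihedral n)))
    = partition_basis.class_mat (2 * n) (dih_class n) (dih_weight n)"
proof -
  interpret partition_basis "2 * n" "dih_num_classes n" "dih_class n" "dih_rep n" "dih_extra n" "dih_weight n"
    by (rule partition_basis_dihedral[OF assms])
  show ?thesis
    by (rule eq_matI)
      (use assms in \<open>auto simp: class_mat_def sombor_matrix_def conj_super_enh_power_adj_dih_vertices_iff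
        graph_deg_dih_vertices dih_weight_def dih_class_eq_0_iff\<close>)
qed

section \<open>The Sombor spectrum\<close>

lemma proots_prod_list_linear_factors:
  fixes a :: "'b \<Rightarrow> 'a :: idom"
  shows "proots (\<Prod>x\<leftarrow>xs. [:a x, 1:]) = mset (map (\<lambda>x. - a x) xs)"
proof (induction xs)
  case (Cons x xs)
  have "proots ([:a x, 1:] * (\<Prod>x\<leftarrow>xs. [:a x, 1:])) = proots [:a x, 1:] + proots (\<Prod>x\<leftarrow>xs. [:a x, 1:])"
    by (rule proots_mult) (auto simp: prod_list_zero_iff)
  then show ?case
    using Cons by (simp del: mult_pCons_left)
qed simp

lemma mset_map_upt_split:
  assumes "a \<le> b" "b \<le> c" "\<And>i. a \<le> i \<Longrightarrow> i < b \<Longrightarrow> f i = x" "\<And>i. b \<le> i \<Longrightarrow> i < c \<Longrightarrow> f i = y"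
  shows "mset (map f [a..<c]) = replicate_mset (b - a) x + replicate_mset (c - b) y"
proof -
  have "[a..<c] = [a..<b] @ [b..<c]"
    using assms(1,2) by (metis le_add_diff_inverse upt_add_eq_append)
  moreover have "map f [a..<b] = replicate (b - a) x"
    by (rule replicate_eqI) (auto simp: assms(3))
  moreover have "map f [b..<c] = replicate (c - b) y"
    by (rule replicate_eqI) (auto simp: assms(4))
  ultimately show ?thesis
    by simp
qed

context
  fixes n :: nat
  assumes n_ge_3: "n \<ge> 3"
begin

interpretation E: partition_basis "2 * n" "dih_num_classes n" "dih_class n" "dih_rep n" "dih_extra n" "dih_weight n"
  by (rule partition_basis_dihedral[OF n_ge_3])

lemma dihedral_cse_sombor_spectrum_eq:
  "dihedral_cse_sombor_spectrum n = proots (char_poly E.quotient_mat)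
    + mset (map (\<lambda>l. - dih_weight n (dih_class n (dih_extra n l)) (dih_class n (dih_extra n l)))
        [dih_num_classes n..<2 * n])"
proof -
  let ?d = "\<lambda>l. dih_weight n (dih_class n (dih_extra n l)) (dih_class n (dih_extra n l))"
  have "dihedral_cse_sombor_spectrum n = proots (char_poly E.class_mat)"
    unfolding dihedral_cse_sombor_spectrum_def sombor_spectrum_def dih_vertices_def[symmetric]
      sombor_matrix_dih_vertices[OF n_ge_3] ..
  also have "\<dots> = proots (char_poly E.quotient_mat) + proots (\<Prod>l\<leftarrow>[dih_num_classes n..<2 * n]. [:?d l, 1:])"
    unfolding E.char_poly_class_mat
    by (rule proots_mult) (auto simp: E.char_poly_quotient_mat_nonzero prod_list_zero_iff)
  finally show ?thesis
    by (simp add: proots_prod_list_linear_factors)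
qed

lemma dih_class_dih_extra_rotation:
  "dih_num_classes n \<le> l \<Longrightarrow> l < n + dih_num_classes n - 2 \<Longrightarrow> dih_class n (dih_extra n l) = 1"
  using n_ge_3 by (auto simp: dih_class_def dih_extra_def dih_num_classes_def)

lemma dih_class_dih_extra_reflection:
  "n + dih_num_classes n - 2 \<le> l \<Longrightarrow> l < 2 * n \<Longrightarrow> dih_class n (dih_extra n l) \<in> {2, 3}"
  using n_ge_3 by (auto simp: dih_class_def dih_extra_def dih_num_classes_def split: if_splits)

lemma dih_weight_1_1: "dih_weight n 1 1 = (of_nat n - 1) * complex_of_real (sqrt 2)"
  using n_ge_3 dih_weight_diag[of n 1] dih_degree_1[of n] by (simp add: of_nat_diff)

lemma dih_weight_0_1_sq: "dih_weight n 0 1 * dih_weight n 0 1 = 5 * of_nat n ^ 2 - 6 * of_nat n + 2"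
  using n_ge_3 dih_weight_hub_sq[of n 1] dih_degree_1[of n]
  by (simp add: of_nat_diff power2_eq_square algebra_simps)

end

context
  fixes n :: nat
  assumes n_ge_3: "n \<ge> 3" and odd_n: "odd n"
begin

interpretation E: partition_basis "2 * n" "dih_num_classes n" "dih_class n" "dih_rep n" "dih_extra n" "dih_weight n"
  by (rule partition_basis_dihedral[OF n_ge_3])

lemma dih_weight_2_2_odd: "dih_weight n 2 2 = of_nat n * complex_of_real (sqrt 2)"
  using odd_n by (simp add: dih_weight_diag dih_degree_2_odd)

lemma dih_weight_0_2_sq_odd: "dih_weight n 0 2 * dih_weight n 0 2 = 5 * of_nat n ^ 2 - 4 * of_nat n + 1"
  using n_ge_3 odd_n
  by (simp add: dih_weight_hub_sq dih_degree_2_odd of_nat_diff power2_eq_square algebra_simps)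

lemma poly_char_poly_quotient_odd:
  "poly (char_poly E.quotient_mat) x
    = x * (x - dih_weight n 1 1 * (of_nat n - 2)) * (x - dih_weight n 2 2 * (of_nat n - 1))
      - dih_weight n 0 1 * dih_weight n 0 1 * (of_nat n - 1) * (x - dih_weight n 2 2 * (of_nat n - 1))
      - dih_weight n 0 2 * dih_weight n 0 2 * of_nat n * (x - dih_weight n 1 1 * (of_nat n - 2))"
proof -
  have sizes: "E.class_size 0 = 1" "E.class_size 1 = n - 1" "E.class_size 2 = n"
    using n_ge_3 odd_n class_set_dih_class_0[of n] class_set_dih_class_1[of n] class_set_dih_class_2_odd[of n]
    by (simp_all add: E.class_size_def)
  have K: "dih_num_classes n = 3"
    using odd_n by (simp add: dih_num_classes_def)
  show ?thesis
    unfolding E.poly_char_poly_quotient_mat unfolding K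
    using n_ge_3 sizes dih_weight_sym[of n 1 0] dih_weight_sym[of n 2 0]
    by (subst det_arrowhead_3; simp add: dih_weight_eq_0 of_nat_diff algebra_simps)
qed

lemma char_poly_quotient_odd:
  "char_poly E.quotient_mat =
    [:0, 1:] * [:- ((of_nat n - 1) * (of_nat n - 2) * complex_of_real (sqrt 2)), 1:]
      * [:- (of_nat n * (of_nat n - 1) * complex_of_real (sqrt 2)), 1:]
    - Polynomial.smult ((of_nat n - 1) * (5 * of_nat n ^ 2 - 6 * of_nat n + 2))
        [:- (of_nat n * (of_nat n - 1) * complex_of_real (sqrt 2)), 1:]
    - Polynomial.smult (of_nat n * (5 * of_nat n ^ 2 - 4 * of_nat n + 1))
        [:- ((of_nat n - 1) * (of_nat n - 2) * complex_of_real (sqrt 2)), 1:]"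
  (is "_ = ?T")
proof -
  have "poly (char_poly E.quotient_mat) x = poly ?T x" for x
    unfolding poly_char_poly_quotient_odd dih_weight_0_1_sq[OF n_ge_3] dih_weight_0_2_sq_odd
      dih_weight_1_1[OF n_ge_3] dih_weight_2_2_odd
    by (simp add: algebra_simps)
  then show ?thesis
    using poly_eq_poly_eq_iff by blast
qed

lemma dihedral_cse_sombor_spectrum_odd:
  "dihedral_cse_sombor_spectrum n =
      replicate_mset (n - 2) (- (of_nat n - 1) * complex_of_real (sqrt 2))
    + replicate_mset (n - 1) (- of_nat n * complex_of_real (sqrt 2))
    + proots ([:0, 1:] * [:- ((of_nat n - 1) * (of_nat n - 2) * complex_of_real (sqrt 2)), 1:]
                       * [:- (of_nat n * (of_nat n - 1) * complex_of_real (sqrt 2)), 1:]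
          - Polynomial.smult ((of_nat n - 1) * (5 * of_nat n ^ 2 - 6 * of_nat n + 2))
                  [:- (of_nat n * (of_nat n - 1) * complex_of_real (sqrt 2)), 1:]
          - Polynomial.smult (of_nat n * (5 * of_nat n ^ 2 - 4 * of_nat n + 1))
                  [:- ((of_nat n - 1) * (of_nat n - 2) * complex_of_real (sqrt 2)), 1:])"
proof -
  have K: "dih_num_classes n = 3"
    using odd_n by (simp add: dih_num_classes_def)
  let ?f = "\<lambda>l. - dih_weight n (dih_class n (dih_extra n l)) (dih_class n (dih_extra n l))"
  have "mset (map ?f [3..<2 * n])
      = replicate_mset (n + 1 - 3) (- (of_nat n - 1) * complex_of_real (sqrt 2))
        + replicate_mset (2 * n - (n + 1)) (- of_nat n * complex_of_real (sqrt 2))"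
  proof (rule mset_map_upt_split)
    fix l assume "3 \<le> l" "l < n + 1"
    then show "?f l = - (of_nat n - 1) * complex_of_real (sqrt 2)"
      using dih_class_dih_extra_rotation[OF n_ge_3, of l] K dih_weight_1_1[OF n_ge_3]
      by (simp add: algebra_simps)
  next
    fix l assume "n + 1 \<le> l" "l < 2 * n"
    then show "?f l = - of_nat n * complex_of_real (sqrt 2)"
      using odd_n dih_weight_2_2_odd by (simp add: dih_class_def dih_extra_def K)
  qed (use n_ge_3 in auto)
  moreover have "dihedral_cse_sombor_spectrum n = proots (char_poly E.quotient_mat) + mset (map ?f [3..<2 * n])"
    unfolding dihedral_cse_sombor_spectrum_eq[OF n_ge_3] by (simp only: K)
  ultimately show ?thesis
    unfolding char_poly_quotient_odd using n_ge_3 by (simp add: add_ac)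
qed

end

context
  fixes n :: nat
  assumes n_ge_3: "n \<ge> 3" and even_n: "even n"
begin

interpretation E: partition_basis "2 * n" "dih_num_classes n" "dih_class n" "dih_rep n" "dih_extra n" "dih_weight n"
  by (rule partition_basis_dihedral[OF n_ge_3])

lemma of_nat_half: "(of_nat (n div 2) :: complex) = of_nat n / 2"
  using even_n by (auto elim: evenE)

lemma dih_weight_reflections_even:
  "dih_weight n 2 2 = of_nat n / 2 * complex_of_real (sqrt 2)" "dih_weight n 3 3 = dih_weight n 2 2"
  "dih_weight n 0 3 = dih_weight n 0 2"
  using dih_degree_even[OF even_n] of_nat_half by (simp_all add: dih_weight_diag dih_weight_def)

lemma dih_weight_0_2_sq_even:
  "dih_weight n 0 2 * dih_weight n 0 2 = (17 * of_nat n ^ 2 - 16 * of_nat n + 4) / 4"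
  using n_ge_3 dih_weight_hub_sq[of n 2] dih_degree_even[OF even_n] of_nat_half
  by (simp add: of_nat_diff power2_eq_square field_simps)

lemma poly_char_poly_quotient_even:
  "poly (char_poly E.quotient_mat) x
    = x * (x - dih_weight n 1 1 * (of_nat n - 2)) * (x - dih_weight n 2 2 * (of_nat n / 2 - 1))
        * (x - dih_weight n 2 2 * (of_nat n / 2 - 1))
      - dih_weight n 0 1 * dih_weight n 0 1 * (of_nat n - 1)
        * (x - dih_weight n 2 2 * (of_nat n / 2 - 1)) * (x - dih_weight n 2 2 * (of_nat n / 2 - 1))
      - 2 * (dih_weight n 0 2 * dih_weight n 0 2 * (of_nat n / 2))
        * (x - dih_weight n 1 1 * (of_nat n - 2)) * (x - dih_weight n 2 2 * (of_nat n / 2 - 1))"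
proof -
  have sizes: "E.class_size 0 = 1" "E.class_size 1 = n - 1" "E.class_size 2 = n div 2" "E.class_size 3 = n div 2"
    using n_ge_3 dih_degree_even[OF even_n, of 2] dih_degree_even[OF even_n, of 3]
      class_set_dih_class_0[of n] class_set_dih_class_1[of n]
    by (simp_all add: E.class_size_def dih_degree_def)
  have K: "dih_num_classes n = 4"
    using even_n by (simp add: dih_num_classes_def)
  show ?thesis
    unfolding E.poly_char_poly_quotient_mat unfolding K
    using n_ge_3 sizes dih_weight_reflections_even(2,3)
      dih_weight_sym[of n 1 0] dih_weight_sym[of n 2 0] dih_weight_sym[of n 3 0]
    by (subst det_arrowhead_4; simp add: dih_weight_eq_0 of_nat_diff of_nat_half diff_diff_eq)
qed

lemma char_poly_quotient_even:
  "char_poly E.quotient_mat = [:- (of_nat n * (of_nat n - 2) / 4 * complex_of_real (sqrt 2)), 1:] *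
    ([:0, 1:] * [:- ((of_nat n - 1) * (of_nat n - 2) * complex_of_real (sqrt 2)), 1:]
       * [:- (of_nat n * (of_nat n - 2) / 4 * complex_of_real (sqrt 2)), 1:]
     - Polynomial.smult ((of_nat n - 1) * (5 * of_nat n ^ 2 - 6 * of_nat n + 2))
         [:- (of_nat n * (of_nat n - 2) / 4 * complex_of_real (sqrt 2)), 1:]
     - Polynomial.smult (of_nat n / 4 * (17 * of_nat n ^ 2 - 16 * of_nat n + 4))
         [:- ((of_nat n - 2) * (of_nat n - 1) * complex_of_real (sqrt 2)), 1:])"
  (is "_ = ?T")
proof -
  define h :: complex where "h = of_nat n / 2"
  have n_h: "of_nat n = 2 * h"
    by (simp add: h_def)
  have h_forms: "of_nat n / 2 = h" "of_nat n * (of_nat n - 2) / 4 = h * (h - 1)"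
    "of_nat n / 4 * (17 * of_nat n ^ 2 - 16 * of_nat n + 4) = 2 * h * (17 * h ^ 2 - 8 * h + 1)"
    "(17 * of_nat n ^ 2 - 16 * of_nat n + 4) / 4 = 17 * h ^ 2 - 8 * h + 1"
    unfolding n_h by (simp_all add: field_simps power2_eq_square)
  have "poly (char_poly E.quotient_mat) x = poly ?T x" for x
    unfolding poly_char_poly_quotient_even dih_weight_0_1_sq[OF n_ge_3] dih_weight_0_2_sq_even
      dih_weight_1_1[OF n_ge_3] dih_weight_reflections_even(1) h_forms
    unfolding n_h by (simp add: algebra_simps)
  then show ?thesis
    using poly_eq_poly_eq_iff by blast
qed

lemma dihedral_cse_sombor_spectrum_even:
  "dihedral_cse_sombor_spectrum n =
      replicate_mset (n - 2) (- (of_nat n / 2) * complex_of_real (sqrt 2))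
    + replicate_mset (n - 2) (- (of_nat n - 1) * complex_of_real (sqrt 2))
    + {# of_nat n * (of_nat n - 2) / 4 * complex_of_real (sqrt 2) #}
    + proots ([:0, 1:] * [:- ((of_nat n - 1) * (of_nat n - 2) * complex_of_real (sqrt 2)), 1:]
                       * [:- (of_nat n * (of_nat n - 2) / 4 * complex_of_real (sqrt 2)), 1:]
          - Polynomial.smult ((of_nat n - 1) * (5 * of_nat n ^ 2 - 6 * of_nat n + 2))
                  [:- (of_nat n * (of_nat n - 2) / 4 * complex_of_real (sqrt 2)), 1:]
          - Polynomial.smult (of_nat n / 4 * (17 * of_nat n ^ 2 - 16 * of_nat n + 4))
                  [:- ((of_nat n - 2) * (of_nat n - 1) * complex_of_real (sqrt 2)), 1:])"
    (is "_ = ?A + ?B + ?C + proots ?P")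
proof -
  have K: "dih_num_classes n = 4"
    using even_n by (simp add: dih_num_classes_def)
  let ?f = "\<lambda>l. - dih_weight n (dih_class n (dih_extra n l)) (dih_class n (dih_extra n l))"
  have "mset (map ?f [4..<2 * n])
      = replicate_mset (n + 2 - 4) (- (of_nat n - 1) * complex_of_real (sqrt 2))
        + replicate_mset (2 * n - (n + 2)) (- (of_nat n / 2) * complex_of_real (sqrt 2))"
  proof (rule mset_map_upt_split)
    fix l assume "4 \<le> l" "l < n + 2"
    then show "?f l = - (of_nat n - 1) * complex_of_real (sqrt 2)"
      using dih_class_dih_extra_rotation[OF n_ge_3, of l] K dih_weight_1_1[OF n_ge_3]
      by (simp add: algebra_simps)
  next
    fix l assume "n + 2 \<le> l" "l < 2 * n"
    then show "?f l = - (of_nat n / 2) * complex_of_real (sqrt 2)"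
      using dih_class_dih_extra_reflection[OF n_ge_3, of l] K dih_weight_reflections_even(1,2) by auto
  qed (use n_ge_3 in auto)
  then have "mset (map ?f [4..<2 * n]) = ?B + ?A"
    using n_ge_3 by (simp add: add.commute)
  moreover have "proots (char_poly E.quotient_mat) = ?C + proots ?P"
  proof -
    have "?P \<noteq> 0"
      using E.char_poly_quotient_mat_nonzero
      unfolding char_poly_quotient_even by auto
    then show ?thesis
      unfolding char_poly_quotient_even by (subst proots_mult) auto
  qed
  moreover have "dihedral_cse_sombor_spectrum n = proots (char_poly E.quotient_mat) + mset (map ?f [4..<2 * n])"
    unfolding dihedral_cse_sombor_spectrum_eq[OF n_ge_3] by (simp only: K)
  ultimately show ?thesis
    by (simp add: add_ac)
qed

end

theorem corollary5p6:
  fixes n :: nat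
  assumes "n \<ge> 3"
  shows "(odd n \<longrightarrow> dihedral_cse_sombor_spectrum n =
      replicate_mset (n - 2) (- (of_nat n - 1) * complex_of_real (sqrt 2))
    + replicate_mset (n - 1) (- of_nat n * complex_of_real (sqrt 2))
    + proots ([:0, 1:] * [:- ((of_nat n - 1) * (of_nat n - 2) * complex_of_real (sqrt 2)), 1:]
                       * [:- (of_nat n * (of_nat n - 1) * complex_of_real (sqrt 2)), 1:]
          - Polynomial.smult ((of_nat n - 1) * (5 * of_nat n ^ 2 - 6 * of_nat n + 2))
                  [:- (of_nat n * (of_nat n - 1) * complex_of_real (sqrt 2)), 1:]
          - Polynomial.smult (of_nat n * (5 * of_nat n ^ 2 - 4 * of_nat n + 1))
                  [:- ((of_nat n - 1) * (of_nat n - 2) * complex_of_real (sqrt 2)), 1:])) \<and>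
    (even n \<longrightarrow> dihedral_cse_sombor_spectrum n =
      replicate_mset (n - 2) (- (of_nat n / 2) * complex_of_real (sqrt 2))
    + replicate_mset (n - 2) (- (of_nat n - 1) * complex_of_real (sqrt 2))
    + {# of_nat n * (of_nat n - 2) / 4 * complex_of_real (sqrt 2) #}
    + proots ([:0, 1:] * [:- ((of_nat n - 1) * (of_nat n - 2) * complex_of_real (sqrt 2)), 1:]
                       * [:- (of_nat n * (of_nat n - 2) / 4 * complex_of_real (sqrt 2)), 1:]
          - Polynomial.smult ((of_nat n - 1) * (5 * of_nat n ^ 2 - 6 * of_nat n + 2))
                  [:- (of_nat n * (of_nat n - 2) / 4 * complex_of_real (sqrt 2)), 1:]
          - Polynomial.smult (of_nat n / 4 * (17 * of_nat n ^ 2 - 16 * of_nat n + 4))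
                  [:- ((of_nat n - 2) * (of_nat n - 1) * complex_of_real (sqrt 2)), 1:]))"
  using dihedral_cse_sombor_spectrum_odd[OF assms] dihedral_cse_sombor_spectrum_even[OF assms] by blast

end
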